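(* Let $\varphi:X\to\mathbb R$ be Lipschitz continuous. Every calibrated subaction $u$ of $\varphi$ satisfies \[u(\underline{y})=\inf_{\underline{x}\in\Omega_\varphi}\big(H_\varphi(\underline{x},\underline{y})+u(\underline{x})\big)\quad\text{for every }\underline{y}\in X.\]
   Context: $X=[0,1]^{\mathbb N_0}$ with metric $d_X(\underline{x},\underline{y})=\sum_{i\ge0}|x_i-y_i|/2^{i+1}$ and shift $\sigma(\underline{x})_i=x_{i+1}$. $\alpha_\varphi=\inf_\mu\int\varphi\,d\mu$ over $\sigma$-invariant Borel probability measures. $B(\underline{x},\underline{y},n;\varepsilon)=\{\underline{z}: d_X(\underline{x},\underline{z})<\varepsilon,\ d_X(\sigma^n\underline{z},\underline{y})<\varepsilon\}$. Mañé potential $S_\varphi(\underline{x},\underline{y})=\lim_{\varepsilon\to0}\inf\{\sum_{i=0}^{n-1}(\varphi(\sigma^i\underline{z})-\alpha_\varphi): n\in\mathbb N,\ \underline{z}\in B(\underline{x},\underline{y},n;\varepsilon)\}$; Peierls barrier $H_\varphi(\underline{x},\underline{y})=\lim_{\varepsilon\to0}\liminf_{n\to\infty}\inf\{\sum_{i=0}^{n-1}(\varphi(\sigma^i\underline{z})-\alpha_\varphi): \underline{z}\in B(\underline{x},\underline{y},n;\varepsilon)\}\in\mathbb R\cup\{+\infty\}$; Aubry set $\Omega_\varphi=\{\underline{x}: S_\varphi(\underline{x},\underline{x})=0\}$. A subaction of $\varphi$ is a continuous $u:X\to\mathbb R$ with $u(\underline{x})+\varphi(\underline{x})\ge u(\sigma\underline{x})+\alpha_\varphi$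 for all $\underline{x}$; it is calibrated if moreover $\min_{\sigma(\underline{y})=\underline{x}}(\varphi(\underline{y})+u(\underline{y}))=u(\underline{x})+\alpha_\varphi$ for every $\underline{x}\in X$. *)

theory Defs
  imports "HOL-Probability.Probability"
begin

type_synonym seq = "nat \<Rightarrow> real"

definition Xsp :: "seq set" where
  "Xsp = {x. \<forall>i. x i \<in> {0..1}}"

definition dX :: "seq \<Rightarrow> seq \<Rightarrow> real" where
  "dX x y = (\<Sum>i. \<bar>x i - y i\<bar> / 2 ^ (i + 1))"

definition shift :: "seq \<Rightarrow> seq" where
  "shift x = (\<lambda>i. x (Suc i))"

definition openX :: "seq set \<Rightarrow> bool" where
  "openX U \<longleftrightarrow> U \<subseteq> Xsp \<and> (\<forall>x\<in>U. \<exists>e>0. \<forall>z\<in>Xsp. dX x z < e \<longrightarrow> z \<in> U)"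

definition borelX :: "seq measure" where
  "borelX = sigma Xsp {U. openX U}"

definition invariant_measures :: "seq measure set" where
  "invariant_measures = {M. prob_space M \<and> sets M = sets borelX \<and>
      shift \<in> measurable M M \<and> distr M M shift = M}"

definition alpha :: "(seq \<Rightarrow> real) \<Rightarrow> real" where
  "alpha \<phi> = Inf {integral\<^sup>L M \<phi> | M. M \<in> invariant_measures}"

definition birk :: "(seq \<Rightarrow> real) \<Rightarrow> nat \<Rightarrow> seq \<Rightarrow> real" where
  "birk \<phi> n z = (\<Sum>i<n. \<phi> ((shift ^^ i) z) - alpha \<phi>)"

definition Bset :: "seq \<Rightarrow> seq \<Rightarrow> nat \<Rightarrow> real \<Rightarrow> seq set" where
  "Bset x y n e = {z \<in> Xsp. dX x z < e \<and> dX ((shift ^^ n) z) y < e}"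

definition mane :: "(seq \<Rightarrow> real) \<Rightarrow> seq \<Rightarrow> seq \<Rightarrow> ereal" where
  "mane \<phi> x y = Lim (at_right 0)
     (\<lambda>e. Inf {ereal (birk \<phi> n z) | n z. n \<ge> 1 \<and> z \<in> Bset x y n e})"

definition peierls :: "(seq \<Rightarrow> real) \<Rightarrow> seq \<Rightarrow> seq \<Rightarrow> ereal" where
  "peierls \<phi> x y = Lim (at_right 0)
     (\<lambda>e. liminf (\<lambda>n. Inf {ereal (birk \<phi> n z) | z. z \<in> Bset x y n e}))"

definition aubry :: "(seq \<Rightarrow> real) \<Rightarrow> seq set" where
  "aubry \<phi> = {x \<in> Xsp. mane \<phi> x x = 0}"

definition continuousX :: "(seq \<Rightarrow> real) \<Rightarrow> bool" where
  "continuousX u \<longleftrightarrow> (\<forall>x\<in>Xsp. \<forall>e>0. \<exists>d>0. \<forall>y\<in>Xsp. dX x y < d \<longrightarrow> \<bar>u y - u x\<bar> < e)"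

definition lipschitzX :: "(seq \<Rightarrow> real) \<Rightarrow> bool" where
  "lipschitzX \<phi> \<longleftrightarrow> (\<exists>L. \<forall>x\<in>Xsp. \<forall>y\<in>Xsp. \<bar>\<phi> x - \<phi> y\<bar> \<le> L * dX x y)"

definition subaction :: "(seq \<Rightarrow> real) \<Rightarrow> (seq \<Rightarrow> real) \<Rightarrow> bool" where
  "subaction \<phi> u \<longleftrightarrow> continuousX u \<and>
     (\<forall>x\<in>Xsp. u x + \<phi> x \<ge> u (shift x) + alpha \<phi>)"

definition calibrated_subaction :: "(seq \<Rightarrow> real) \<Rightarrow> (seq \<Rightarrow> real) \<Rightarrow> bool" where
  "calibrated_subaction \<phi> u \<longleftrightarrow> subaction \<phi> u \<and>
     (\<forall>x\<in>Xsp. (\<exists>y\<in>Xsp. shift y = x \<and> \<phi> y + u y = u x + alpha \<phi>) \<and>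
               (\<forall>y\<in>Xsp. shift y = x \<longrightarrow> \<phi> y + u y \<ge> u x + alpha \<phi>))"

end

theory Submission
  imports Defs
begin

text \<open>
  A subaction u satisfies birk \<phi> n z \<ge> u (\<sigma>^n z) - u z along every orbit segment, and by
  continuity of u this survives the limits defining the Peierls barrier: H(x, y) \<ge> u y - u x.
  Hence u y \<le> H(x, y) + u x for every x, and likewise S(x, x) \<ge> 0.

  For the converse, calibration provides a backward orbit Y 0 = y, \<sigma> (Y (k + 1)) = Y k,
  along which the subaction inequality is an equality, so the Birkhoff sums telescope:
  birk \<phi> n (Y (m + n)) = u (Y m) - u (Y (m + n)). By compactness of X a subsequence
  Y (r k) converges to some l. The orbit segment from Y (r (k + 1)) to Y (r k) is a loop near l
  whose cost tends to 0, so S(l, l) = 0 and l lies in the Aubry set; the segment from Y (r k)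
  to y costs u y - u (Y (r k)), which tends to u y - u l, so H(l, y) + u l \<le> u y.
\<close>

lemma dX_sym: "dX x y = dX y x"
  unfolding dX_def by (simp add: abs_minus_commute)

lemma dX_self: "dX x x = 0"
  by (simp add: dX_def)

lemma dX_term_le:
  assumes "x \<in> Xsp" "z \<in> Xsp"
  shows "\<bar>x i - z i\<bar> / 2 ^ (i + 1) \<le> (1/2::real) ^ (i + 1)"
proof -
  have "x i \<in> {0..1}" "z i \<in> {0..1}" using assms by (auto simp: Xsp_def)
  then have "\<bar>x i - z i\<bar> \<le> 1" by auto
  then show ?thesis by (simp add: power_one_over divide_right_mono)
qed

lemma shift_in_Xsp: "x \<in> Xsp \<Longrightarrow> shift x \<in> Xsp"
  unfolding Xsp_def shift_def by auto

lemma funpow_shift_in_Xsp: "x \<in> Xsp \<Longrightarrow> (shift ^^ n) x \<in> Xsp"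
  by (induction n) (auto simp: shift_in_Xsp)

lemma birk_Suc: "birk \<phi> (Suc n) z = birk \<phi> n z + (\<phi> ((shift ^^ n) z) - alpha \<phi>)"
  by (simp add: birk_def)

lemma Bset_mono: "e1 \<le> e2 \<Longrightarrow> Bset x y n e1 \<subseteq> Bset x y n e2"
  by (auto simp: Bset_def)

lemma dX_tendsto_zero_coordinatewise:
  assumes "\<And>n. f n \<in> Xsp" "x \<in> Xsp" "\<And>i. (\<lambda>n. f n i) \<longlonglongrightarrow> x i"
  shows "(\<lambda>n. dX x (f n)) \<longlonglongrightarrow> 0"
proof -
  have "(\<lambda>n. \<Sum>i. \<bar>x i - f n i\<bar> / 2 ^ (i + 1)) \<longlonglongrightarrow> (\<Sum>i. 0 :: real)"
  proof (rule conjunct2[OF conjunct2[OF tannerys_theorem]])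
    show "(\<lambda>n. \<bar>x i - f n i\<bar> / 2 ^ (i + 1)) \<longlonglongrightarrow> 0" for i
      using assms(3)[of i] by (auto intro!: tendsto_eq_intros)
    show "\<forall>\<^sub>F (i, n) in at_top \<times>\<^sub>F sequentially. norm (\<bar>x i - f n i\<bar> / 2 ^ (i + 1)) \<le> (1/2::real) ^ (i + 1)"
      using dX_term_le[OF assms(2,1)] by (intro always_eventually) auto
    show "summable (\<lambda>i. (1/2::real) ^ (i + 1))"
      using summable_ignore_initial_segment[OF summable_geometric[of "1/2::real"], of 1] by simp
  qed simp
  then show ?thesis by (simp add: dX_def)
qed

lemma Xsp_convergent_subseq:
  fixes f :: "nat \<Rightarrow> seq"
  assumes "\<And>n. f n \<in> Xsp"
  obtains l r where "l \<in> Xsp" "strict_mono r" "\<And>i. (\<lambda>n. f (r n) i) \<longlonglongrightarrow> l i"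
proof -
  have Xsp_PiE: "Xsp = PiE UNIV (\<lambda>_. {0..1})"
    by (auto simp: Xsp_def PiE_UNIV_domain)
  have "compactin (product_topology (\<lambda>_. euclidean) UNIV) (PiE UNIV (\<lambda>_::nat. {0..1::real}))"
    by (simp add: compactin_PiE)
  then have "compact Xsp"
    by (simp add: Xsp_PiE euclidean_product_topology)
  then obtain l r where "l \<in> Xsp" "strict_mono r" "(f \<circ> r) \<longlonglongrightarrow> l"
    using assms by (metis compact_imp_seq_compact seq_compactE)
  moreover have "(\<lambda>n. f (r n) i) \<longlonglongrightarrow> l i" for i
    using continuous_on_tendsto_compose[OF continuous_on_product_coordinates \<open>(f \<circ> r) \<longlonglongrightarrow> l\<close>]
    by (simp add: o_def)
  ultimately show ?thesis using that by blast
qed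

lemma continuousX_tendsto:
  assumes "continuousX u" "l \<in> Xsp" "\<And>n. f n \<in> Xsp" "(\<lambda>n. dX l (f n)) \<longlonglongrightarrow> 0"
  shows "(\<lambda>n. u (f n)) \<longlonglongrightarrow> u l"
proof (rule LIMSEQ_I)
  fix e :: real assume "e > 0"
  then obtain d where "d > 0" and d: "\<forall>z\<in>Xsp. dX l z < d \<longrightarrow> \<bar>u z - u l\<bar> < e"
    using assms(1,2) unfolding continuousX_def by blast
  obtain N where "\<forall>n\<ge>N. dX l (f n) < d"
    using order_tendstoD(2)[OF assms(4) \<open>d > 0\<close>] by (auto simp: eventually_sequentially)
  then show "\<exists>N. \<forall>n\<ge>N. norm (u (f n) - u l) < e"
    using d assms(3) by auto
qed

lemma ereal_le_if_le_below:
  fixes P :: ereal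
  assumes "\<And>c. c < r \<Longrightarrow> ereal c \<le> P"
  shows "ereal r \<le> P"
proof (rule dense_le)
  fix c :: ereal assume "c < ereal r"
  then show "c \<le> P" using assms by (cases c) auto
qed

lemma ereal_le_if_le_above:
  fixes P :: ereal
  assumes "\<And>c. r < c \<Longrightarrow> P \<le> ereal c"
  shows "P \<le> ereal r"
proof (rule dense_ge)
  fix c :: ereal assume "ereal r < c"
  then show "P \<le> c" using assms by (cases c) auto
qed

lemma Lim_at_right_antimono:
  fixes g :: "real \<Rightarrow> 'a :: {complete_linorder, linorder_topology}"
  assumes "\<And>e1 e2. 0 < e1 \<Longrightarrow> e1 \<le> e2 \<Longrightarrow> g e2 \<le> g e1"
  shows "Lim (at_right 0) g = (SUP e\<in>{0<..}. g e)"
proof (intro tendsto_Lim order_tendstoI)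
  fix a assume "a < (SUP e\<in>{0<..}. g e)"
  then obtain e0 where "e0 > 0" "a < g e0" by (auto simp: less_SUP_iff)
  then show "\<forall>\<^sub>F e in at_right 0. a < g e"
    unfolding eventually_at_right_field using assms by (meson less_eq_real_def less_le_trans)
next
  fix a assume "(SUP e\<in>{0<..}. g e) < a"
  then show "\<forall>\<^sub>F e in at_right 0. g e < a"
    unfolding eventually_at_right_field
    by (intro exI[of _ 1]) (auto intro: le_less_trans[OF SUP_upper])
qed simp

lemma mane_eq_SUP:
  "mane \<phi> x y = (SUP e\<in>{0<..}. Inf {ereal (birk \<phi> n z) | n z. n \<ge> 1 \<and> z \<in> Bset x y n e})"
  unfolding mane_def
  by (rule Lim_at_right_antimono, rule Inf_superset_mono) (use Bset_mono in blast)

lemma peierls_eq_SUP: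
  "peierls \<phi> x y = (SUP e\<in>{0<..}. liminf (\<lambda>n. Inf {ereal (birk \<phi> n z) | z. z \<in> Bset x y n e}))"
  unfolding peierls_def
  by (rule Lim_at_right_antimono, intro Liminf_mono always_eventually allI Inf_superset_mono)
    (use Bset_mono in blast)

lemma birk_ge_subaction_diff:
  assumes "subaction \<phi> u" "z \<in> Xsp"
  shows "u ((shift ^^ n) z) - u z \<le> birk \<phi> n z"
proof (induction n)
  case 0 then show ?case by (simp add: birk_def)
next
  case (Suc n)
  have "u (shift ((shift ^^ n) z)) + alpha \<phi> \<le> u ((shift ^^ n) z) + \<phi> ((shift ^^ n) z)"
    using assms funpow_shift_in_Xsp unfolding subaction_def by blast
  then show ?case using Suc by (simp add: birk_Suc)
qed

lemma birk_gt_near_subaction_diff: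
  assumes "subaction \<phi> u" "x \<in> Xsp" "y \<in> Xsp" "c < u y - u x"
  obtains d where "d > 0" "\<And>n z. z \<in> Bset x y n d \<Longrightarrow> c < birk \<phi> n z"
proof -
  define ep where "ep = (u y - u x - c) / 2"
  have "ep > 0" using assms(4) by (simp add: ep_def)
  have cont: "continuousX u" using assms(1) by (simp add: subaction_def)
  obtain d1 where "d1 > 0" and d1: "\<forall>z\<in>Xsp. dX x z < d1 \<longrightarrow> \<bar>u z - u x\<bar> < ep"
    using cont assms(2) \<open>ep > 0\<close> unfolding continuousX_def by blast
  obtain d2 where "d2 > 0" and d2: "\<forall>z\<in>Xsp. dX y z < d2 \<longrightarrow> \<bar>u z - u y\<bar> < ep"
    using cont assms(3) \<open>ep > 0\<close> unfolding continuousX_def by blast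
  have "c < birk \<phi> n z" if "z \<in> Bset x y n (min d1 d2)" for n z
  proof -
    have z: "z \<in> Xsp" "dX x z < d1" "dX y ((shift ^^ n) z) < d2"
      using that by (auto simp: Bset_def dX_sym)
    have "u z < u x + ep" "u y - ep < u ((shift ^^ n) z)"
      using d1 d2 z funpow_shift_in_Xsp by (auto simp: abs_less_iff)
    moreover have "u ((shift ^^ n) z) - u z \<le> birk \<phi> n z"
      using birk_ge_subaction_diff[OF assms(1) z(1)] .
    moreover have "c = u y - u x - 2 * ep" by (simp add: ep_def field_simps)
    ultimately show ?thesis by linarith
  qed
  moreover have "min d1 d2 > 0" using \<open>d1 > 0\<close> \<open>d2 > 0\<close> by simp
  ultimately show ?thesis using that by blast
qed

lemma mane_ge_subaction_diff:
  assumes "subaction \<phi> u" "x \<in> Xsp" "y \<in> Xsp"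
  shows "ereal (u y - u x) \<le> mane \<phi> x y"
proof (rule ereal_le_if_le_below)
  fix c assume "c < u y - u x"
  then obtain d where "d > 0" "\<And>n z. z \<in> Bset x y n d \<Longrightarrow> c < birk \<phi> n z"
    using birk_gt_near_subaction_diff[OF assms] by blast
  then have "ereal c \<le> Inf {ereal (birk \<phi> n z) | n z. n \<ge> 1 \<and> z \<in> Bset x y n d}"
    by (intro Inf_greatest) (auto intro: less_imp_le)
  also have "\<dots> \<le> mane \<phi> x y"
    unfolding mane_eq_SUP using \<open>d > 0\<close> by (intro SUP_upper) auto
  finally show "ereal c \<le> mane \<phi> x y" .
qed

lemma peierls_ge_subaction_diff:
  assumes "subaction \<phi> u" "x \<in> Xsp" "y \<in> Xsp"
  shows "ereal (u y - u x) \<le> peierls \<phi> x y"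
proof (rule ereal_le_if_le_below)
  fix c assume "c < u y - u x"
  then obtain d where "d > 0" "\<And>n z. z \<in> Bset x y n d \<Longrightarrow> c < birk \<phi> n z"
    using birk_gt_near_subaction_diff[OF assms] by blast
  then have "ereal c \<le> liminf (\<lambda>n. Inf {ereal (birk \<phi> n z) | z. z \<in> Bset x y n d})"
    by (intro Liminf_bounded always_eventually allI Inf_greatest) (auto intro: less_imp_le)
  also have "\<dots> \<le> peierls \<phi> x y"
    unfolding peierls_eq_SUP using \<open>d > 0\<close> by (intro SUP_upper) auto
  finally show "ereal c \<le> peierls \<phi> x y" .
qed

definition calibrated_preorbit :: "(seq \<Rightarrow> real) \<Rightarrow> (seq \<Rightarrow> real) \<Rightarrow> (nat \<Rightarrow> seq) \<Rightarrow> bool" where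
  "calibrated_preorbit \<phi> u Y \<longleftrightarrow> (\<forall>k. Y k \<in> Xsp \<and> shift (Y (Suc k)) = Y k \<and>
     \<phi> (Y (Suc k)) + u (Y (Suc k)) = u (Y k) + alpha \<phi>)"

lemma calibrated_preorbit_exists:
  assumes "calibrated_subaction \<phi> u" "y \<in> Xsp"
  obtains Y where "calibrated_preorbit \<phi> u Y" "Y 0 = y"
proof -
  have "\<forall>x\<in>Xsp. \<exists>w. w \<in> Xsp \<and> shift w = x \<and> \<phi> w + u w = u x + alpha \<phi>"
    using assms(1) unfolding calibrated_subaction_def by blast
  then obtain p where p: "\<And>x. x \<in> Xsp \<Longrightarrow> p x \<in> Xsp \<and> shift (p x) = x \<and> \<phi> (p x) + u (p x) = u x + alpha \<phi>"
    by metis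
  have "(p ^^ k) y \<in> Xsp" for k
    by (induction k) (simp_all add: assms(2) p)
  then have "calibrated_preorbit \<phi> u (\<lambda>k. (p ^^ k) y)"
    by (simp add: calibrated_preorbit_def p)
  then show ?thesis using that by simp
qed

lemma funpow_shift_preorbit:
  assumes "calibrated_preorbit \<phi> u Y"
  shows "(shift ^^ n) (Y (m + n)) = Y m"
proof (induction n arbitrary: m)
  case (Suc n)
  have "(shift ^^ Suc n) (Y (m + Suc n)) = (shift ^^ n) (shift (Y (Suc (m + n))))"
    by (simp only: funpow_Suc_right comp_apply add_Suc_right)
  also have "\<dots> = Y m"
    using assms Suc.IH by (simp add: calibrated_preorbit_def)
  finally show ?case .
qed simp

lemma birk_preorbit:
  assumes "calibrated_preorbit \<phi> u Y"
  shows "birk \<phi> n (Y (m + n)) = u (Y m) - u (Y (m + n))"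
proof (induction n arbitrary: m)
  case 0 then show ?case by (simp add: birk_def)
next
  case (Suc n)
  have "birk \<phi> (Suc n) (Y (Suc m + n)) = birk \<phi> n (Y (Suc m + n)) + (\<phi> (Y (Suc m)) - alpha \<phi>)"
    using funpow_shift_preorbit[OF assms, of n "Suc m"] by (simp add: birk_Suc)
  also have "\<dots> = u (Y m) - u (Y (Suc m + n))"
    using assms Suc.IH[of "Suc m"] by (simp add: calibrated_preorbit_def algebra_simps)
  finally show ?case by simp
qed

lemma mane_self_nonpos_at_preorbit_limit:
  assumes Y: "calibrated_preorbit \<phi> u Y" and r: "strict_mono r"
    and dist_lim: "(\<lambda>n. dX l (Y (r n))) \<longlonglongrightarrow> 0" and u_lim: "(\<lambda>n. u (Y (r n))) \<longlonglongrightarrow> u l"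
  shows "mane \<phi> l l \<le> 0"
  unfolding mane_eq_SUP
proof (rule SUP_least)
  fix e :: real assume "e \<in> {0<..}"
  let ?S = "{ereal (birk \<phi> n z) | n z. n \<ge> 1 \<and> z \<in> Bset l l n e}"
  have "\<forall>\<^sub>F N in sequentially. dX l (Y (r N)) < e \<and> dX l (Y (r (Suc N))) < e"
    using \<open>e \<in> {0<..}\<close> by (intro eventually_conj order_tendstoD(2)[OF dist_lim]
        order_tendstoD(2)[OF LIMSEQ_Suc[OF dist_lim]]) auto
  then have "\<forall>\<^sub>F N in sequentially. Inf ?S \<le> ereal (u (Y (r N)) - u (Y (r (Suc N))))"
  proof eventually_elim
    case (elim N)
    define k where "k = r (Suc N) - r N"
    have "r N < r (Suc N)" using strict_monoD[OF r] by simp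
    then have k: "1 \<le> k" "r (Suc N) = r N + k" by (auto simp: k_def)
    have "Y (r (Suc N)) \<in> Bset l l k e"
      using elim Y funpow_shift_preorbit[OF Y, of k "r N"]
      by (auto simp: Bset_def dX_sym calibrated_preorbit_def k(2))
    then have "Inf ?S \<le> ereal (birk \<phi> k (Y (r (Suc N))))"
      using k(1) by (intro Inf_lower) blast
    also have "birk \<phi> k (Y (r (Suc N))) = u (Y (r N)) - u (Y (r (Suc N)))"
      using birk_preorbit[OF Y, of k "r N"] by (simp add: k(2))
    finally show ?case .
  qed
  moreover have "(\<lambda>N. ereal (u (Y (r N)) - u (Y (r (Suc N))))) \<longlonglongrightarrow> 0"
    using tendsto_diff[OF u_lim LIMSEQ_Suc[OF u_lim]] by (simp add: zero_ereal_def)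
  ultimately show "Inf ?S \<le> 0"
    by (intro tendsto_le[OF trivial_limit_sequentially _ tendsto_const])
qed

lemma peierls_le_at_preorbit_limit:
  assumes Y: "calibrated_preorbit \<phi> u Y" and r: "strict_mono r"
    and dist_lim: "(\<lambda>n. dX l (Y (r n))) \<longlonglongrightarrow> 0" and u_lim: "(\<lambda>n. u (Y (r n))) \<longlonglongrightarrow> u l"
  shows "peierls \<phi> l (Y 0) \<le> ereal (u (Y 0) - u l)"
  unfolding peierls_eq_SUP
proof (rule SUP_least)
  fix e :: real assume "e \<in> {0<..}"
  define a where "a n = Inf {ereal (birk \<phi> n z) | z. z \<in> Bset l (Y 0) n e}" for n
  have "\<forall>\<^sub>F n in sequentially. dX l (Y (r n)) < e"
    using \<open>e \<in> {0<..}\<close> by (intro order_tendstoD(2)[OF dist_lim]) auto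
  then have "\<forall>\<^sub>F n in sequentially. (a \<circ> r) n \<le> ereal (u (Y 0) - u (Y (r n)))"
  proof eventually_elim
    case (elim n)
    have "Y (r n) \<in> Bset l (Y 0) (r n) e"
      using elim Y funpow_shift_preorbit[OF Y, of "r n" 0] \<open>e \<in> {0<..}\<close>
      by (auto simp: Bset_def dX_self calibrated_preorbit_def)
    then have "(a \<circ> r) n \<le> ereal (birk \<phi> (r n) (Y (r n)))"
      unfolding a_def o_def by (intro Inf_lower) blast
    also have "birk \<phi> (r n) (Y (r n)) = u (Y 0) - u (Y (r n))"
      using birk_preorbit[OF Y, of "r n" 0] by simp
    finally show ?case .
  qed
  then have "liminf (a \<circ> r) \<le> liminf (\<lambda>n. ereal (u (Y 0) - u (Y (r n))))"
    by (rule Liminf_mono)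
  also have "\<dots> = ereal (u (Y 0) - u l)"
    using u_lim by (intro lim_imp_Liminf) (auto intro!: tendsto_intros)
  finally show "liminf a \<le> ereal (u (Y 0) - u l)"
    using liminf_subseq_mono[OF r, of a] by simp
qed

lemma calibrated_subaction_exists_aubry_point:
  assumes "calibrated_subaction \<phi> u" "y \<in> Xsp"
  obtains l where "l \<in> aubry \<phi>" "peierls \<phi> l y + ereal (u l) \<le> ereal (u y)"
proof -
  have sub: "subaction \<phi> u" using assms(1) by (simp add: calibrated_subaction_def)
  obtain Y where Y: "calibrated_preorbit \<phi> u Y" and "Y 0 = y"
    using calibrated_preorbit_exists[OF assms] .
  have Y_in: "Y n \<in> Xsp" for n using Y by (simp add: calibrated_preorbit_def)
  obtain l r where l: "l \<in> Xsp" and r: "strict_mono r"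
    and coord_lim: "\<And>i. (\<lambda>n. Y (r n) i) \<longlonglongrightarrow> l i"
    using Xsp_convergent_subseq[of Y, OF Y_in] by blast
  have dist_lim: "(\<lambda>n. dX l (Y (r n))) \<longlonglongrightarrow> 0"
    using Y_in l coord_lim by (rule dX_tendsto_zero_coordinatewise)
  have u_lim: "(\<lambda>n. u (Y (r n))) \<longlonglongrightarrow> u l"
    using _ l Y_in dist_lim by (rule continuousX_tendsto) (use sub in \<open>simp add: subaction_def\<close>)
  have "mane \<phi> l l = 0"
  proof (rule antisym)
    show "mane \<phi> l l \<le> 0"
      using Y r dist_lim u_lim by (rule mane_self_nonpos_at_preorbit_limit)
    show "0 \<le> mane \<phi> l l"
      using mane_ge_subaction_diff[OF sub l l] by (simp add: zero_ereal_def)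
  qed
  then have "l \<in> aubry \<phi>" using l by (simp add: aubry_def)
  moreover have "peierls \<phi> l y + ereal (u l) \<le> ereal (u y)"
    using peierls_le_at_preorbit_limit[OF Y r dist_lim u_lim] \<open>Y 0 = y\<close>
    by (cases "peierls \<phi> l y") auto
  ultimately show thesis using that by blast
qed

theorem theorem2p12:
  fixes \<phi> u :: "seq \<Rightarrow> real"
  assumes "lipschitzX \<phi>"
    and "calibrated_subaction \<phi> u"
  shows "\<forall>y\<in>Xsp. ereal (u y) = (INF x\<in>aubry \<phi>. peierls \<phi> x y + ereal (u x))"
proof
  fix y assume y: "y \<in> Xsp"
  have sub: "subaction \<phi> u" using assms(2) by (simp add: calibrated_subaction_def)
  have lower: "ereal (u y) \<le> peierls \<phi> x y + ereal (u x)" if "x \<in> aubry \<phi>" for x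
    using peierls_ge_subaction_diff[OF sub _ y, of x] that
    by (cases "peierls \<phi> x y") (auto simp: aubry_def)
  obtain l where "l \<in> aubry \<phi>" "peierls \<phi> l y + ereal (u l) \<le> ereal (u y)"
    using calibrated_subaction_exists_aubry_point[OF assms(2) y] .
  then show "ereal (u y) = (INF x\<in>aubry \<phi>. peierls \<phi> x y + ereal (u x))"
    using lower by (intro antisym INF_greatest INF_lower2) auto
qed

end
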